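(* Let $(\Omega,\mathcal F,\mu)$ be a finite measure space, $p\in[1,\infty)$ and $k\ge1$. Then $\mathscr G_{p,k}$ is proximinal in $L^p(\Omega,\mathcal F,\mu)$. Moreover, let $f\in L^p$ and let $g=\sum_{i=1}^q b_i\mathbf 1_{A_i}$ be a minimizer ($\|f-g\|_p=\mathscr D_{p,k}(f)$) with $q\le k$, $b_1<\dots<b_q$ real, and $\{A_i\}_{1\le i\le q}$ a measurable partition of $\Omega$ with $\mu(A_i)>0$ for all $i$. Put $r_1=-\infty$, $r_{q+1}=+\infty$, $r_i=\frac{b_{i-1}+b_i}{2}$ for $2\le i\le q$, and $C_i=f^{-1}([r_i,r_{i+1}))$ for $1\le i\le q$. Then $\sum_{i=1}^q b_i\mathbf 1_{C_i}$ is a minimizer; for each $i$ with $\mu(C_i)>0$, $b_i$ is a $p$-th mean of $f$ on $C_i$; and $\tilde g=\sum_{i=1}^q\mathcal M_p(f,C_i)\mathbf 1_{C_i}$ is also a minimizer in $\mathscr G_{p,q}$. If $q$ is the smallest number of distinct values among all minimizers, then $\mu(C_i)>0$ for all $i$.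
   Context: $\mathscr G_{p,k}$ is the set of functions $\sum_{i=1}^l a_i\mathbf 1_{A_i}\in L^p$ with $l\le k$, $\{A_i\}$ a measurable partition of $\Omega$, $a_i\in\mathbb R$; $\mathscr D_{p,k}(f)=\inf\{\|f-h\|_p:\ h\in\mathscr G_{p,k}\}$; a minimizer is any $g\in\mathscr G_{p,k}$ with $\|f-g\|_p=\mathscr D_{p,k}(f)$; $\mathscr G_{p,k}$ is proximinal if minimizers exist for every $f\in L^p$. $p$-th mean: for measurable $A$ with $0<\mu(A)<\infty$, a $p$-th mean of $f$ on $A$ is any minimizer over $a\in\mathbb R$ of $\int_A|f-a|^p\,d\mu$; for $p>1$ it is unique and denoted $\mathcal M_p(f,A)$; for $p=1$ the minimizers form a bounded closed interval $[a^*,b^*]$ and $\mathcal M_1(f,A)=(a^*+b^* )/2$; if $\mu(A)=0$, $\mathcal M_p(f,A)=0$. *)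

theory Defs
  imports "HOL-Analysis.Analysis"
begin

definition in_Lp :: "'a measure \<Rightarrow> real \<Rightarrow> ('a \<Rightarrow> real) \<Rightarrow> bool" where
  "in_Lp M p f \<longleftrightarrow> f \<in> borel_measurable M \<and> integrable M (\<lambda>x. \<bar>f x\<bar> powr p)"

definition lpnorm :: "'a measure \<Rightarrow> real \<Rightarrow> ('a \<Rightarrow> real) \<Rightarrow> real" where
  "lpnorm M p f = (\<integral>x. \<bar>f x\<bar> powr p \<partial>M) powr (1 / p)"

definition is_partition :: "'a measure \<Rightarrow> nat \<Rightarrow> (nat \<Rightarrow> 'a set) \<Rightarrow> bool" where
  "is_partition M l A \<longleftrightarrow>
     (\<forall>i\<in>{1..l}. A i \<in> sets M) \<and>
     (\<forall>i\<in>{1..l}. \<forall>j\<in>{1..l}. i \<noteq> j \<longrightarrow> A i \<inter> A j = {}) \<and>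
     (\<Union>i\<in>{1..l}. A i) = space M"

definition Gset :: "'a measure \<Rightarrow> real \<Rightarrow> nat \<Rightarrow> ('a \<Rightarrow> real) set" where
  "Gset M p k = {h. in_Lp M p h \<and>
     (\<exists>l a A. l \<le> k \<and> is_partition M l A \<and> h = (\<lambda>x. \<Sum>i=1..l. a i * indicator (A i) x))}"

definition Dpk :: "'a measure \<Rightarrow> real \<Rightarrow> nat \<Rightarrow> ('a \<Rightarrow> real) \<Rightarrow> real" where
  "Dpk M p k f = Inf ((\<lambda>h. lpnorm M p (\<lambda>x. f x - h x)) ` Gset M p k)"

definition is_minimizer :: "'a measure \<Rightarrow> real \<Rightarrow> nat \<Rightarrow> ('a \<Rightarrow> real) \<Rightarrow> ('a \<Rightarrow> real) \<Rightarrow> bool" where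
  "is_minimizer M p k f g \<longleftrightarrow> g \<in> Gset M p k \<and> lpnorm M p (\<lambda>x. f x - g x) = Dpk M p k f"

definition proximinal :: "'a measure \<Rightarrow> real \<Rightarrow> nat \<Rightarrow> bool" where
  "proximinal M p k \<longleftrightarrow> (\<forall>f. in_Lp M p f \<longrightarrow> (\<exists>g. is_minimizer M p k f g))"

definition is_pth_mean :: "'a measure \<Rightarrow> real \<Rightarrow> ('a \<Rightarrow> real) \<Rightarrow> 'a set \<Rightarrow> real \<Rightarrow> bool" where
  "is_pth_mean M p f A a \<longleftrightarrow>
     (\<forall>c. (LINT x:A|M. \<bar>f x - a\<bar> powr p) \<le> (LINT x:A|M. \<bar>f x - c\<bar> powr p))"

definition Mp :: "'a measure \<Rightarrow> real \<Rightarrow> ('a \<Rightarrow> real) \<Rightarrow> 'a set \<Rightarrow> real" where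
  "Mp M p f A =
     (if measure M A = 0 then 0
      else if p = 1 then (Inf {a. is_pth_mean M p f A a} + Sup {a. is_pth_mean M p f A a}) / 2
      else (THE a. is_pth_mean M p f A a))"

definition thr :: "(nat \<Rightarrow> real) \<Rightarrow> nat \<Rightarrow> nat \<Rightarrow> ereal" where
  "thr b q i = (if i = 1 then -\<infinity> else if i = q + 1 then \<infinity> else ereal ((b (i - 1) + b i) / 2))"

definition Cset :: "'a measure \<Rightarrow> ('a \<Rightarrow> real) \<Rightarrow> (nat \<Rightarrow> real) \<Rightarrow> nat \<Rightarrow> nat \<Rightarrow> 'a set" where
  "Cset M f b q i = {x \<in> space M. thr b q i \<le> ereal (f x) \<and> ereal (f x) < thr b q (i + 1)}"

end

theory Submission
  imports Defs
begin

text \<open>For fixed values a_1, ..., a_k the best step function sends every point to a nearest a_i,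
  so the p-th power of the error of the best approximation is the infimum over a of the integral
  of min_i |f - a_i|^p. Along a minimising sequence the a_i converge, after passing to a subsequence,
  in the extended reals; by Fatou's lemma the values with finite limits are optimal, and if all of
  them escape to infinity the space is null.

  Given a minimiser with increasing values b_i, moving every point to the cell C_i of its nearest
  value (the cells are cut at the midpoints) cannot increase the error. The error then splits into
  a sum over the cells, so each b_i must be a p-th mean on C_i and may be replaced by
  M_p(f, C_i). Finally, a null cell would allow one value to be dropped.\<close>

section \<open>Step functions on partitions\<close>

abbreviation step_fun :: "nat \<Rightarrow> (nat \<Rightarrow> real) \<Rightarrow> (nat \<Rightarrow> 'a set) \<Rightarrow> 'a \<Rightarrow> real" where
  "step_fun l a A \<equiv> (\<lambda>x. \<Sum>i=1..l. a i * indicator (A i) x)"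

lemma is_partition_sets: "is_partition M l A \<Longrightarrow> i \<in> {1..l} \<Longrightarrow> A i \<in> sets M"
  by (simp add: is_partition_def)

lemma is_partition_cover: "is_partition M l A \<Longrightarrow> x \<in> space M \<Longrightarrow> \<exists>j\<in>{1..l}. x \<in> A j"
  unfolding is_partition_def by blast

lemma step_fun_eq:
  assumes "is_partition M l A" "j \<in> {1..l}" "x \<in> A j"
  shows "step_fun l a A x = a j"
proof -
  have "x \<notin> A i" if "i \<in> {1..l}" "i \<noteq> j" for i
    using assms that unfolding is_partition_def by blast
  then have "a i * indicator (A i) x = (if i = j then a j else 0)" if "i \<in> {1..l}" for i
    using assms(3) that by auto
  then have "step_fun l a A x = (\<Sum>i=1..l. if i = j then a j else 0)"
    by (intro sum.cong) auto
  also have "\<dots> = a j" using assms(2) by simp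
  finally show ?thesis .
qed

lemma step_fun_value:
  assumes "is_partition M l A" "x \<in> space M"
  obtains j where "j \<in> {1..l}" "x \<in> A j" "step_fun l a A x = a j"
  using is_partition_cover[OF assms] step_fun_eq[OF assms(1)] by blast

lemma step_fun_measurable:
  "is_partition M l A \<Longrightarrow> step_fun l a A \<in> borel_measurable M"
  by (intro borel_measurable_sum borel_measurable_times borel_measurable_const
        borel_measurable_indicator is_partition_sets)

lemma in_Lp_bounded:
  assumes "finite_measure M" "h \<in> borel_measurable M" "\<And>x. x \<in> space M \<Longrightarrow> \<bar>h x\<bar> \<le> B" "0 \<le> p"
  shows "in_Lp M p h"
  unfolding in_Lp_def
proof
  show "integrable M (\<lambda>x. \<bar>h x\<bar> powr p)"
  proof (rule finite_measure.integrable_const_bound[where B = "B powr p"])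
    show "AE x in M. norm (\<bar>h x\<bar> powr p) \<le> B powr p"
      using assms(3,4) by (intro AE_I2) (auto intro: powr_mono2)
  qed (use assms(1,2) in measurable)
qed fact

lemma in_Lp_const: "finite_measure M \<Longrightarrow> 0 \<le> p \<Longrightarrow> in_Lp M p (\<lambda>x. c)"
  by (rule in_Lp_bounded[where B = "\<bar>c\<bar>"]) auto

lemma step_fun_in_Lp:
  assumes "finite_measure M" "is_partition M l A" "0 \<le> p"
  shows "in_Lp M p (step_fun l a A)"
proof (rule in_Lp_bounded[OF assms(1) step_fun_measurable[OF assms(2)] _ assms(3)])
  fix x assume "x \<in> space M"
  then obtain j where "j \<in> {1..l}" "step_fun l a A x = a j"
    using step_fun_value[OF assms(2)] by metis
  then show "\<bar>step_fun l a A x\<bar> \<le> (\<Sum>i=1..l. \<bar>a i\<bar>)"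
    by (auto intro: member_le_sum)
qed

lemma step_fun_in_Gset:
  "finite_measure M \<Longrightarrow> is_partition M l A \<Longrightarrow> 0 \<le> p \<Longrightarrow> l \<le> k \<Longrightarrow> step_fun l a A \<in> Gset M p k"
  unfolding Gset_def using step_fun_in_Lp by blast

lemma Gset_mono: "q \<le> k \<Longrightarrow> Gset M p q \<subseteq> Gset M p k"
  unfolding Gset_def by (auto intro: le_trans)

lemma powr_add_le:
  fixes u v p :: real
  assumes "0 \<le> u" "0 \<le> v" "0 \<le> p"
  shows "(u + v) powr p \<le> 2 powr p * (u powr p + v powr p)"
proof -
  have "(u + v) powr p \<le> (2 * max u v) powr p"
    using assms by (intro powr_mono2) auto
  also have "\<dots> = 2 powr p * max u v powr p"
    using assms by (simp add: powr_mult)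
  also have "\<dots> \<le> 2 powr p * (u powr p + v powr p)"
    by (intro mult_left_mono) (auto simp: max_def)
  finally show ?thesis .
qed

lemma integrable_abs_diff_powr:
  assumes "in_Lp M p f" "in_Lp M p g" "0 \<le> p"
  shows "integrable M (\<lambda>x. \<bar>f x - g x\<bar> powr p)"
proof (rule Bochner_Integration.integrable_bound)
  have [measurable]: "f \<in> borel_measurable M" "g \<in> borel_measurable M"
    using assms unfolding in_Lp_def by auto
  show "integrable M (\<lambda>x. 2 powr p * (\<bar>f x\<bar> powr p + \<bar>g x\<bar> powr p))"
    using assms unfolding in_Lp_def by auto
  show "(\<lambda>x. \<bar>f x - g x\<bar> powr p) \<in> borel_measurable M"
    by measurable
  have "\<bar>f x - g x\<bar> powr p \<le> 2 powr p * (\<bar>f x\<bar> powr p + \<bar>g x\<bar> powr p)" for x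
    using powr_mono2[OF assms(3) _ abs_triangle_ineq4[of "f x" "g x"]]
      powr_add_le[of "\<bar>f x\<bar>" "\<bar>g x\<bar>" p] assms(3) by simp
  then show "AE x in M. norm (\<bar>f x - g x\<bar> powr p) \<le> norm (2 powr p * (\<bar>f x\<bar> powr p + \<bar>g x\<bar> powr p))"
    by simp
qed

lemma lpnorm_le_iff:
  assumes "0 < p"
  shows "lpnorm M p f \<le> lpnorm M p g \<longleftrightarrow> (\<integral>x. \<bar>f x\<bar> powr p \<partial>M) \<le> (\<integral>x. \<bar>g x\<bar> powr p \<partial>M)"
proof -
  have "0 \<le> (\<integral>x. \<bar>h x\<bar> powr p \<partial>M)" for h :: "'a \<Rightarrow> real"
    by (rule Bochner_Integration.integral_nonneg) simp
  then show ?thesis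
    unfolding lpnorm_def using assms
    by (metis linorder_not_le powr_less_mono2 powr_mono2 zero_le_divide_1_iff less_imp_le
        divide_pos_pos zero_less_one)
qed

lemma is_minimizerI:
  assumes "g \<in> Gset M p k" "\<And>h. h \<in> Gset M p k \<Longrightarrow> lpnorm M p (\<lambda>x. f x - g x) \<le> lpnorm M p (\<lambda>x. f x - h x)"
  shows "is_minimizer M p k f g"
  unfolding is_minimizer_def Dpk_def using assms
  by (intro conjI cInf_eq_minimum[symmetric]) auto

lemma is_minimizerD:
  assumes "is_minimizer M p k f g" "h \<in> Gset M p k"
  shows "lpnorm M p (\<lambda>x. f x - g x) \<le> lpnorm M p (\<lambda>x. f x - h x)"
proof -
  have "Dpk M p k f \<le> lpnorm M p (\<lambda>x. f x - h x)"
    unfolding Dpk_def using assms(2)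
    by (intro cInf_lower) (auto intro: bdd_belowI[where m = 0] simp: lpnorm_def)
  then show ?thesis using assms(1) unfolding is_minimizer_def by simp
qed

lemma is_minimizer_if_integral_le:
  assumes "is_minimizer M p k f g" "h \<in> Gset M p q" "q \<le> k" "0 < p"
    and "(\<integral>x. \<bar>f x - h x\<bar> powr p \<partial>M) \<le> (\<integral>x. \<bar>f x - g x\<bar> powr p \<partial>M)"
  shows "is_minimizer M p q f h"
proof (rule is_minimizerI[OF assms(2)])
  fix h' assume "h' \<in> Gset M p q"
  then have "lpnorm M p (\<lambda>x. f x - g x) \<le> lpnorm M p (\<lambda>x. f x - h' x)"
    using is_minimizerD[OF assms(1)] Gset_mono[OF assms(3)] by blast
  moreover have "lpnorm M p (\<lambda>x. f x - h x) \<le> lpnorm M p (\<lambda>x. f x - g x)"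
    using assms(4,5) by (simp add: lpnorm_le_iff)
  ultimately show "lpnorm M p (\<lambda>x. f x - h x) \<le> lpnorm M p (\<lambda>x. f x - h' x)" by linarith
qed

lemma is_minimizer_integral_le:
  assumes "is_minimizer M p k f g" "h \<in> Gset M p k" "0 < p"
  shows "(\<integral>x. \<bar>f x - g x\<bar> powr p \<partial>M) \<le> (\<integral>x. \<bar>f x - h x\<bar> powr p \<partial>M)"
  using is_minimizerD[OF assms(1,2)] assms(3) by (simp add: lpnorm_le_iff)

section \<open>Existence of best approximations\<close>

definition min_dist_powr :: "nat \<Rightarrow> ('a \<Rightarrow> real) \<Rightarrow> real \<Rightarrow> (nat \<Rightarrow> real) \<Rightarrow> 'a \<Rightarrow> real" where
  "min_dist_powr k f p a x = (MIN i\<in>{1..k}. \<bar>f x - a i\<bar>) powr p"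

lemma min_dist_powr_nonneg: "0 \<le> min_dist_powr k f p a x"
  by (simp add: min_dist_powr_def)

lemma min_dist_powr_le:
  assumes "i \<in> {1..k}" "0 \<le> p"
  shows "min_dist_powr k f p a x \<le> \<bar>f x - a i\<bar> powr p"
  unfolding min_dist_powr_def using assms by (intro powr_mono2) (auto simp: Min_le_iff)

lemma min_dist_powr_measurable:
  assumes [measurable]: "f \<in> borel_measurable M"
  shows "min_dist_powr k f p a \<in> borel_measurable M"
proof -
  have "(\<lambda>x. MIN i\<in>{1..k}. \<bar>f x - a i\<bar>) \<in> borel_measurable M"
    by (rule borel_measurable_Min) auto
  then show ?thesis unfolding min_dist_powr_def[abs_def] by measurable
qed

lemma integrable_min_dist_powr:
  assumes "finite_measure M" "in_Lp M p f" "0 \<le> p" "1 \<le> k"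
  shows "integrable M (min_dist_powr k f p a)"
proof (rule Bochner_Integration.integrable_bound)
  show "integrable M (\<lambda>x. \<bar>f x - a 1\<bar> powr p)"
    using integrable_abs_diff_powr[OF assms(2) in_Lp_const[OF assms(1,3)] assms(3)] by simp
  show "min_dist_powr k f p a \<in> borel_measurable M"
    using assms(2) unfolding in_Lp_def by (simp add: min_dist_powr_measurable)
  show "AE x in M. norm (min_dist_powr k f p a x) \<le> norm (\<bar>f x - a 1\<bar> powr p)"
    using min_dist_powr_le[of 1 k p f a] assms(3,4) by (simp add: min_dist_powr_nonneg)
qed

lemma min_dist_powr_le_step_fun:
  assumes "h \<in> Gset M p k" "0 \<le> p"
  obtains a where "\<And>x. x \<in> space M \<Longrightarrow> min_dist_powr k f p a x \<le> \<bar>f x - h x\<bar> powr p"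
proof -
  obtain l a A where l: "l \<le> k" "is_partition M l A" "h = step_fun l a A"
    using assms(1) unfolding Gset_def by blast
  have "min_dist_powr k f p a x \<le> \<bar>f x - h x\<bar> powr p" if x: "x \<in> space M" for x
  proof -
    obtain j where "j \<in> {1..l}" "h x = a j"
      using step_fun_value[OF l(2) x] l(3) by metis
    then show ?thesis using min_dist_powr_le[of j k p f a x] l(1) assms(2) by simp
  qed
  then show ?thesis using that by blast
qed

text \<open>Ties are broken in favour of the smallest index, which makes the cells disjoint.\<close>

definition nearest_cell :: "'a measure \<Rightarrow> ('a \<Rightarrow> real) \<Rightarrow> nat \<Rightarrow> (nat \<Rightarrow> real) \<Rightarrow> nat \<Rightarrow> 'a set" where
  "nearest_cell M f k a i = {x \<in> space M. (\<forall>j\<in>{1..k}. \<bar>f x - a i\<bar> \<le> \<bar>f x - a j\<bar>) \<and>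
      (\<forall>j\<in>{1..<i}. \<bar>f x - a i\<bar> < \<bar>f x - a j\<bar>)}"

lemma nearest_cell_dist:
  "x \<in> nearest_cell M f k a i \<Longrightarrow> i \<in> {1..k} \<Longrightarrow> \<bar>f x - a i\<bar> = (MIN j\<in>{1..k}. \<bar>f x - a j\<bar>)"
  unfolding nearest_cell_def by (intro Min_eqI[symmetric]) auto

lemma nearest_cell_disjoint:
  assumes "i \<in> {1..k}" "j \<in> {1..k}" "i < j"
  shows "nearest_cell M f k a i \<inter> nearest_cell M f k a j = {}"
proof -
  have "\<bar>f x - a j\<bar> < \<bar>f x - a i\<bar>" "\<bar>f x - a i\<bar> \<le> \<bar>f x - a j\<bar>"
    if "x \<in> nearest_cell M f k a i" "x \<in> nearest_cell M f k a j" for x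
  proof -
    have "i \<in> {1..<j}" using assms by simp
    then show "\<bar>f x - a j\<bar> < \<bar>f x - a i\<bar>"
      using that(2) unfolding nearest_cell_def by blast
    show "\<bar>f x - a i\<bar> \<le> \<bar>f x - a j\<bar>"
      using that(1) assms(2) unfolding nearest_cell_def by blast
  qed
  then show ?thesis by (meson disjoint_iff not_le)
qed

lemma nearest_cell_cover:
  assumes "x \<in> space M" "1 \<le> k"
  shows "\<exists>i\<in>{1..k}. x \<in> nearest_cell M f k a i"
proof -
  let ?d = "\<lambda>i. \<bar>f x - a i\<bar>"
  let ?near = "\<lambda>i. i \<in> {1..k} \<and> (\<forall>j\<in>{1..k}. ?d i \<le> ?d j)"
  have "(MIN j\<in>{1..k}. ?d j) \<in> ?d ` {1..k}"
    using assms(2) by (intro Min_in) auto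
  then obtain i where "i \<in> {1..k}" "?d i = (MIN j\<in>{1..k}. ?d j)" by auto
  then have "?near i" by simp
  then have near: "?near (LEAST i. ?near i)" by (rule LeastI)
  have "?d (LEAST i. ?near i) < ?d j" if "j \<in> {1..<(LEAST i. ?near i)}" for j
  proof -
    have "\<not> ?near j" "j \<in> {1..k}"
      using not_less_Least[of j ?near] near that by auto
    then obtain l where "l \<in> {1..k}" "?d l < ?d j" by (meson not_le)
    with near show ?thesis by (meson order.strict_trans1)
  qed
  then have "x \<in> nearest_cell M f k a (LEAST i. ?near i)"
    unfolding nearest_cell_def using near assms(1) by blast
  then show ?thesis using near by blast
qed

lemma is_partition_nearest_cell:
  assumes [measurable]: "f \<in> borel_measurable M" and "1 \<le> k"
  shows "is_partition M k (nearest_cell M f k a)"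
  unfolding is_partition_def
proof (intro conjI ballI impI)
  show "nearest_cell M f k a i \<in> sets M" for i
    unfolding nearest_cell_def by measurable
  show "nearest_cell M f k a i \<inter> nearest_cell M f k a j = {}"
    if "i \<in> {1..k}" "j \<in> {1..k}" "i \<noteq> j" for i j
  proof (cases "i < j")
    case True
    then show ?thesis by (rule nearest_cell_disjoint[OF that(1,2)])
  next
    case False
    then have "j < i" using that(3) by simp
    then show ?thesis using nearest_cell_disjoint[OF that(2,1)] by (simp add: Int_commute)
  qed
  show "(\<Union>i\<in>{1..k}. nearest_cell M f k a i) = space M"
  proof
    show "(\<Union>i\<in>{1..k}. nearest_cell M f k a i) \<subseteq> space M"
      unfolding nearest_cell_def by blast
  qed (use nearest_cell_cover[OF _ assms(2), of _ M f a] in blast)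
qed

lemma nearest_centre_step_fun:
  assumes "finite_measure M" "f \<in> borel_measurable M" "0 \<le> p" "1 \<le> k"
  obtains h where "h \<in> Gset M p k" "\<And>x. x \<in> space M \<Longrightarrow> \<bar>f x - h x\<bar> powr p = min_dist_powr k f p a x"
proof
  let ?P = "nearest_cell M f k a"
  have part: "is_partition M k ?P"
    using is_partition_nearest_cell[OF assms(2,4)] .
  show "step_fun k a ?P \<in> Gset M p k"
    by (rule step_fun_in_Gset[OF assms(1) part assms(3) order_refl])
  fix x assume "x \<in> space M"
  then obtain i where i: "i \<in> {1..k}" "x \<in> ?P i" "step_fun k a ?P x = a i"
    using step_fun_value[OF part] by metis
  show "\<bar>f x - step_fun k a ?P x\<bar> powr p = min_dist_powr k f p a x"
    unfolding min_dist_powr_def i(3) nearest_cell_dist[OF i(2,1)] ..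
qed

lemma obtain_seq_tendsto_cInf:
  fixes S :: "real set"
  assumes "S \<noteq> {}" "bdd_below S"
  obtains u where "\<And>n. u n \<in> S" "u \<longlonglongrightarrow> Inf S"
proof -
  have "\<exists>s\<in>S. s < Inf S + inverse (real (Suc n))" for n
    using cInf_less_iff[OF assms]
    by (metis less_add_same_cancel1 inverse_positive_iff_positive of_nat_0_less_iff zero_less_Suc)
  then obtain u where u: "\<And>n. u n \<in> S" "\<And>n. u n < Inf S + inverse (real (Suc n))"
    by metis
  have "u \<longlonglongrightarrow> Inf S"
  proof (rule tendsto_sandwich[of "\<lambda>n. Inf S" _ _ "\<lambda>n. Inf S + inverse (real (Suc n))"])
    show "eventually (\<lambda>n. Inf S \<le> u n) sequentially"
      using u(1) assms(2) by (intro always_eventually allI cInf_lower)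
    show "eventually (\<lambda>n. u n \<le> Inf S + inverse (real (Suc n))) sequentially"
      using u(2) by (intro always_eventually allI less_imp_le)
    show "(\<lambda>n. Inf S + inverse (real (Suc n))) \<longlonglongrightarrow> Inf S"
      using tendsto_add[OF tendsto_const LIMSEQ_inverse_real_of_nat] by simp
  qed simp
  then show ?thesis using that u(1) by blast
qed

lemma ereal_convergent_subseq:
  fixes s :: "nat \<Rightarrow> nat \<Rightarrow> real"
  obtains r where "strict_mono r" "\<And>i. i < m \<Longrightarrow> \<exists>l. (\<lambda>n. ereal (s (r n) i)) \<longlonglongrightarrow> l"
proof -
  have "\<exists>r. strict_mono r \<and> (\<forall>i<m. \<exists>l. (\<lambda>n. ereal (s (r n) i)) \<longlonglongrightarrow> l)"
  proof (induction m)
    case 0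
    show ?case using strict_mono_id by blast
  next
    case (Suc m)
    then obtain r where r: "strict_mono r" "\<forall>i<m. \<exists>l. (\<lambda>n. ereal (s (r n) i)) \<longlonglongrightarrow> l"
      by blast
    obtain l r' where r': "strict_mono r'" "((\<lambda>n. ereal (s (r n) m)) \<circ> r') \<longlonglongrightarrow> l"
      using compact_imp_seq_compact[OF compact_UNIV] by (metis seq_compactE UNIV_I)
    have "\<exists>l. (\<lambda>n. ereal (s (r (r' n)) i)) \<longlonglongrightarrow> l" if i: "i < Suc m" for i
    proof (cases "i = m")
      case True then show ?thesis using r'(2) by (auto simp: comp_def)
    next
      case False
      then obtain l' where "(\<lambda>n. ereal (s (r n) i)) \<longlonglongrightarrow> l'" using r(2) i by fastforce
      from LIMSEQ_subseq_LIMSEQ[OF this r'(1)] show ?thesis by (auto simp: comp_def)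
    qed
    then show ?case using strict_mono_o[OF r(1) r'(1)] by (auto simp: comp_def)
  qed
  then show ?thesis using that by blast
qed

lemma tendsto_Min_finite:
  fixes g :: "'b \<Rightarrow> 'i \<Rightarrow> 'a::linorder_topology"
  assumes "finite I" "I \<noteq> {}" "\<And>i. i \<in> I \<Longrightarrow> ((\<lambda>n. g n i) \<longlongrightarrow> L i) F"
  shows "((\<lambda>n. MIN i\<in>I. g n i) \<longlongrightarrow> (MIN i\<in>I. L i)) F"
  using assms
proof (induction I rule: finite_ne_induct)
  case (insert x I)
  then show ?case by (simp add: tendsto_min)
qed simp

lemma tendsto_Min_abs_diff_ereal:
  fixes B :: "nat \<Rightarrow> 'i \<Rightarrow> real"
  assumes "finite I" "I \<noteq> {}" "\<And>i. i \<in> I \<Longrightarrow> (\<lambda>n. ereal (B n i)) \<longlonglongrightarrow> L i"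
  shows "(\<lambda>n. ereal (MIN i\<in>I. \<bar>c - B n i\<bar>)) \<longlonglongrightarrow> (MIN i\<in>I. \<bar>ereal c - L i\<bar>)"
proof -
  have "ereal (MIN i\<in>I. \<bar>c - B n i\<bar>) = (MIN i\<in>I. \<bar>ereal c - ereal (B n i)\<bar>)" for n
    using mono_Min_commute[of ereal "(\<lambda>i. \<bar>c - B n i\<bar>) ` I"] assms(1,2)
    by (simp add: mono_def image_image)
  moreover have "(\<lambda>n. MIN i\<in>I. \<bar>ereal c - ereal (B n i)\<bar>) \<longlonglongrightarrow> (MIN i\<in>I. \<bar>ereal c - L i\<bar>)"
    using assms by (intro tendsto_Min_finite tendsto_intros) auto
  ultimately show ?thesis by simp
qed

lemma Min_abs_diff_ereal_eq:
  assumes "finite I" "j0 \<in> I" "L j0 = ereal c0"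
  defines "a \<equiv> \<lambda>i. if \<bar>L i\<bar> = \<infinity> then c0 else real_of_ereal (L i)"
  shows "(MIN i\<in>I. \<bar>ereal c - L i\<bar>) = ereal (MIN i\<in>I. \<bar>c - a i\<bar>)"
proof -
  have fin: "\<bar>ereal c - L i\<bar> = ereal \<bar>c - a i\<bar>" if "\<bar>L i\<bar> \<noteq> \<infinity>" for i
    using that unfolding a_def by (cases "L i") auto
  have inf: "\<bar>ereal c - L i\<bar> = \<infinity>" if "\<bar>L i\<bar> = \<infinity>" for i
    using that by (cases "L i") auto
  have Min_le_L: "(MIN i\<in>I. \<bar>ereal c - L i\<bar>) \<le> \<bar>ereal c - L j\<bar>" if "j \<in> I" for j
    using assms(1) that by (intro Min_le) auto
  have Min_le_a: "(MIN i\<in>I. ereal \<bar>c - a i\<bar>) \<le> ereal \<bar>c - a j\<bar>" if "j \<in> I" for j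
    using assms(1) that by (intro Min_le) auto
  have "(MIN i\<in>I. \<bar>ereal c - L i\<bar>) = (MIN i\<in>I. ereal \<bar>c - a i\<bar>)"
  proof (rule antisym)
    have "(MIN i\<in>I. \<bar>ereal c - L i\<bar>) \<le> ereal \<bar>c - a i\<bar>" if "i \<in> I" for i
    proof (cases "\<bar>L i\<bar> = \<infinity>")
      case True
      then have "ereal \<bar>c - a i\<bar> = \<bar>ereal c - L j0\<bar>" using assms(3) unfolding a_def by simp
      then show ?thesis using Min_le_L[OF assms(2)] by simp
    qed (use Min_le_L[OF that] fin in simp)
    then show "(MIN i\<in>I. \<bar>ereal c - L i\<bar>) \<le> (MIN i\<in>I. ereal \<bar>c - a i\<bar>)"
      using assms(1,2) by (intro Min.boundedI) auto
    have "(MIN i\<in>I. ereal \<bar>c - a i\<bar>) \<le> \<bar>ereal c - L i\<bar>" if "i \<in> I" for i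
      using Min_le_a[OF that] fin inf by (cases "\<bar>L i\<bar> = \<infinity>") auto
    then show "(MIN i\<in>I. ereal \<bar>c - a i\<bar>) \<le> (MIN i\<in>I. \<bar>ereal c - L i\<bar>)"
      using assms(1,2) by (intro Min.boundedI) auto
  qed
  also have "\<dots> = ereal (MIN i\<in>I. \<bar>c - a i\<bar>)"
    using mono_Min_commute[of ereal "(\<lambda>i. \<bar>c - a i\<bar>) ` I"] assms(1,2)
    by (simp add: mono_def image_image ex_in_conv[symmetric]) metis
  finally show ?thesis .
qed

lemma nn_integral_le_lim_integral:
  fixes u :: "nat \<Rightarrow> 'a \<Rightarrow> real"
  assumes "\<And>n. integrable M (u n)" "\<And>n x. 0 \<le> u n x"
    and "\<And>x. x \<in> space M \<Longrightarrow> (\<lambda>n. ennreal (u n x)) \<longlonglongrightarrow> G x"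
    and "(\<lambda>n. integral\<^sup>L M (u n)) \<longlonglongrightarrow> m"
  shows "(\<integral>\<^sup>+x. G x \<partial>M) \<le> ennreal m"
proof -
  have "(\<integral>\<^sup>+x. G x \<partial>M) = (\<integral>\<^sup>+x. liminf (\<lambda>n. ennreal (u n x)) \<partial>M)"
    using assms(3) by (intro nn_integral_cong) (metis lim_imp_Liminf trivial_limit_sequentially)
  also have "\<dots> \<le> liminf (\<lambda>n. \<integral>\<^sup>+x. ennreal (u n x) \<partial>M)"
    using assms(1) by (intro nn_integral_liminf) simp
  also have "\<dots> = liminf (\<lambda>n. ennreal (integral\<^sup>L M (u n)))"
    using assms(1,2) by (simp add: nn_integral_eq_integral)
  also have "\<dots> = ennreal m"
    using assms(4) by (intro lim_imp_Liminf tendsto_ennrealI) auto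
  finally show ?thesis .
qed

lemma tendsto_min_dist_powr:
  assumes k: "1 \<le> k" and p: "0 < p" and B: "\<And>i. i \<in> {1..k} \<Longrightarrow> (\<lambda>n. ereal (B n i)) \<longlonglongrightarrow> L i"
    and j: "j \<in> {1..k}" "L j = ereal c"
  defines "a \<equiv> \<lambda>i. if \<bar>L i\<bar> = \<infinity> then c else real_of_ereal (L i)"
  shows "(\<lambda>n. min_dist_powr k f p (B n) x) \<longlonglongrightarrow> min_dist_powr k f p a x"
proof -
  have "(\<lambda>n. ereal (MIN i\<in>{1..k}. \<bar>f x - B n i\<bar>)) \<longlonglongrightarrow> (MIN i\<in>{1..k}. \<bar>ereal (f x) - L i\<bar>)"
    using k B by (intro tendsto_Min_abs_diff_ereal) auto
  also have "(MIN i\<in>{1..k}. \<bar>ereal (f x) - L i\<bar>) = ereal (MIN i\<in>{1..k}. \<bar>f x - a i\<bar>)"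
    unfolding a_def using j by (intro Min_abs_diff_ereal_eq[of "{1..k}" j L c]) simp_all
  finally have "(\<lambda>n. MIN i\<in>{1..k}. \<bar>f x - B n i\<bar>) \<longlonglongrightarrow> (MIN i\<in>{1..k}. \<bar>f x - a i\<bar>)"
    by simp
  then show ?thesis
    unfolding min_dist_powr_def using p k by (intro tendsto_powr') auto
qed

lemma min_dist_powr_tendsto_at_top:
  assumes k: "1 \<le> k" and p: "1 \<le> p" and B: "\<And>i. i \<in> {1..k} \<Longrightarrow> (\<lambda>n. ereal (B n i)) \<longlonglongrightarrow> L i"
    and L_inf: "\<And>i. i \<in> {1..k} \<Longrightarrow> \<bar>L i\<bar> = \<infinity>"
  shows "LIM n sequentially. min_dist_powr k f p (B n) x :> at_top"
proof -
  let ?m = "\<lambda>n. MIN i\<in>{1..k}. \<bar>f x - B n i\<bar>"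
  have "\<bar>ereal (f x) - L i\<bar> = \<infinity>" if "i \<in> {1..k}" for i
    using L_inf[OF that] by (cases "L i") auto
  then have "(MIN i\<in>{1..k}. \<bar>ereal (f x) - L i\<bar>) = (MIN i\<in>{1..k}. \<infinity>)"
    by (intro arg_cong[where f = Min] image_cong) auto
  then have "(\<lambda>n. ereal (?m n)) \<longlonglongrightarrow> \<infinity>"
    using tendsto_Min_abs_diff_ereal[of "{1..k}" B L "f x"] k B by simp
  then have m_at_top: "LIM n sequentially. ?m n :> at_top"
    by (simp add: tendsto_PInfty_eq_at_top)
  have "?m n \<le> min_dist_powr k f p (B n) x" if "1 \<le> ?m n" for n
    using that powr_mono[OF p that] unfolding min_dist_powr_def by simp
  then have "eventually (\<lambda>n. ?m n \<le> min_dist_powr k f p (B n) x) sequentially"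
    using m_at_top[unfolded filterlim_at_top, rule_format, of 1] by (auto elim: eventually_mono)
  then show ?thesis by (rule filterlim_at_top_mono[OF m_at_top])
qed

text \<open>Centres escaping to infinity can be discarded; if all of them escape, the space is null.\<close>

lemma integral_min_dist_powr_le_lim:
  assumes fin: "finite_measure M" and f: "in_Lp M p f" and p: "1 \<le> p" and k: "1 \<le> k"
    and B: "\<And>i. i \<in> {1..k} \<Longrightarrow> (\<lambda>n. ereal (B n i)) \<longlonglongrightarrow> L i"
    and m: "(\<lambda>n. integral\<^sup>L M (min_dist_powr k f p (B n))) \<longlonglongrightarrow> m"
  obtains a where "integral\<^sup>L M (min_dist_powr k f p a) \<le> m"
proof -
  have int: "integrable M (min_dist_powr k f p a)" for a
    using integrable_min_dist_powr[OF fin f _ k] p by simp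
  have m_nonneg: "0 \<le> m"
    using m by (rule LIMSEQ_le_const) (auto intro: Bochner_Integration.integral_nonneg min_dist_powr_nonneg)
  have Fatou: "(\<integral>\<^sup>+x. G x \<partial>M) \<le> ennreal m"
    if "\<And>x. x \<in> space M \<Longrightarrow> (\<lambda>n. ennreal (min_dist_powr k f p (B n) x)) \<longlonglongrightarrow> G x" for G
    using int min_dist_powr_nonneg that m by (rule nn_integral_le_lim_integral)
  show ?thesis
  proof (cases "\<exists>j0\<in>{1..k}. \<bar>L j0\<bar> \<noteq> \<infinity>")
    case True
    then obtain j0 c0 where j0: "j0 \<in> {1..k}" "L j0 = ereal c0"
      by (metis abs_ereal.simps(1) ereal_real')
    define a where "a i = (if \<bar>L i\<bar> = \<infinity> then c0 else real_of_ereal (L i))" for i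
    have "(\<lambda>n. ennreal (min_dist_powr k f p (B n) x)) \<longlonglongrightarrow> ennreal (min_dist_powr k f p a x)" for x
      unfolding a_def using p
      by (intro tendsto_ennrealI tendsto_min_dist_powr[where B = B and L = L and j = j0 and c = c0, OF k _ B j0])
        simp
    then have "(\<integral>\<^sup>+x. ennreal (min_dist_powr k f p a x) \<partial>M) \<le> ennreal m"
      by (rule Fatou)
    moreover have "(\<integral>\<^sup>+x. ennreal (min_dist_powr k f p a x) \<partial>M) = ennreal (integral\<^sup>L M (min_dist_powr k f p a))"
      using int by (intro nn_integral_eq_integral) (auto simp: min_dist_powr_nonneg)
    ultimately show ?thesis using that m_nonneg by (simp add: ennreal_le_iff)
  next
    case False
    then have "(\<lambda>n. ennreal (min_dist_powr k f p (B n) x)) \<longlonglongrightarrow> top" for x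
      using min_dist_powr_tendsto_at_top[OF k p B] by (simp add: ennreal_tendsto_top_eq_at_top)
    then have "(\<integral>\<^sup>+x. top \<partial>M) \<le> ennreal m"
      by (rule Fatou)
    then have "emeasure M (space M) = 0"
      by (auto simp: ennreal_top_mult top_unique split: if_splits)
    then have "integral\<^sup>L M (min_dist_powr k f p a) = 0" for a
      by (intro integral_eq_zero_AE AE_I'[where N = "space M"]) auto
    then show ?thesis using that m_nonneg by metis
  qed
qed

lemma exists_optimal_centres:
  assumes fin: "finite_measure M" and f: "in_Lp M p f" and p: "1 \<le> p" and k: "1 \<le> k"
  obtains a where "\<And>b. integral\<^sup>L M (min_dist_powr k f p a) \<le> integral\<^sup>L M (min_dist_powr k f p b)"
proof -
  define \<Phi> where "\<Phi> a = integral\<^sup>L M (min_dist_powr k f p a)" for a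
  have bdd: "bdd_below (range \<Phi>)"
    unfolding \<Phi>_def by (auto intro!: bdd_belowI[where m = 0] Bochner_Integration.integral_nonneg min_dist_powr_nonneg)
  obtain u where "\<And>n. u n \<in> range \<Phi>" "u \<longlonglongrightarrow> Inf (range \<Phi>)"
    using obtain_seq_tendsto_cInf[OF _ bdd] by blast
  moreover from this(1) have "\<forall>n. \<exists>a. u n = \<Phi> a" by blast
  then obtain A where "\<And>n. u n = \<Phi> (A n)" by metis
  then have "u = (\<lambda>n. \<Phi> (A n))" by blast
  ultimately have A: "(\<lambda>n. \<Phi> (A n)) \<longlonglongrightarrow> Inf (range \<Phi>)" by simp
  obtain r where r: "strict_mono r" "\<And>i. i < Suc k \<Longrightarrow> \<exists>l. (\<lambda>n. ereal (A (r n) i)) \<longlonglongrightarrow> l"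
    using ereal_convergent_subseq by blast
  then obtain L where L: "\<And>i. i \<in> {1..k} \<Longrightarrow> (\<lambda>n. ereal (A (r n) i)) \<longlonglongrightarrow> L i"
    by (metis atLeastAtMost_iff less_Suc_eq_le)
  have "(\<lambda>n. \<Phi> (A (r n))) \<longlonglongrightarrow> Inf (range \<Phi>)"
    using LIMSEQ_subseq_LIMSEQ[OF A r(1)] by (simp add: comp_def)
  then obtain a where "\<Phi> a \<le> Inf (range \<Phi>)"
    using integral_min_dist_powr_le_lim[where B = "\<lambda>n. A (r n)", OF fin f p k L] unfolding \<Phi>_def by blast
  then show ?thesis
    using that cInf_lower[OF _ bdd] unfolding \<Phi>_def by (meson order_trans rangeI)
qed

theorem proximinal_Gset:
  assumes fin: "finite_measure M" and p: "1 \<le> p" and k: "1 \<le> k"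
  shows "proximinal M p k"
  unfolding proximinal_def
proof (intro allI impI)
  fix f assume f: "in_Lp M p f"
  have fm: "f \<in> borel_measurable M" and p0: "0 \<le> p"
    using f p unfolding in_Lp_def by auto
  obtain a where a: "\<And>b. integral\<^sup>L M (min_dist_powr k f p a) \<le> integral\<^sup>L M (min_dist_powr k f p b)"
    using exists_optimal_centres[OF fin f p k] by blast
  obtain h where h: "h \<in> Gset M p k" "\<And>x. x \<in> space M \<Longrightarrow> \<bar>f x - h x\<bar> powr p = min_dist_powr k f p a x"
    using nearest_centre_step_fun[OF fin fm p0 k] by blast
  have "is_minimizer M p k f h"
  proof (rule is_minimizerI[OF h(1)])
    fix h' assume h': "h' \<in> Gset M p k"
    obtain b where b: "\<And>x. x \<in> space M \<Longrightarrow> min_dist_powr k f p b x \<le> \<bar>f x - h' x\<bar> powr p"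
      using min_dist_powr_le_step_fun[OF h' p0] by blast
    have "(\<integral>x. \<bar>f x - h x\<bar> powr p \<partial>M) = integral\<^sup>L M (min_dist_powr k f p a)"
      using h(2) by (intro Bochner_Integration.integral_cong) auto
    also have "\<dots> \<le> integral\<^sup>L M (min_dist_powr k f p b)" by (rule a)
    also have "\<dots> \<le> (\<integral>x. \<bar>f x - h' x\<bar> powr p \<partial>M)"
      using b h' p unfolding Gset_def
      by (intro integral_mono integrable_min_dist_powr[OF fin f _ k] integrable_abs_diff_powr[OF f]) auto
    finally show "lpnorm M p (\<lambda>x. f x - h x) \<le> lpnorm M p (\<lambda>x. f x - h' x)"
      using p by (simp add: lpnorm_le_iff)
  qed
  then show "\<exists>g. is_minimizer M p k f g" by blast
qed

section \<open>p-th means\<close>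

lemma set_integral_measure_zero:
  assumes "finite_measure M" "C \<in> sets M" "measure M C = 0"
  shows "(LINT x:C|M. g x) = (0::real)"
proof -
  have "C \<in> null_sets M"
    using assms finite_measure.emeasure_eq_measure[OF assms(1), of C] by auto
  then show ?thesis
    unfolding set_lebesgue_integral_def
    by (intro integral_eq_zero_AE AE_I'[where N = C]) (auto simp: indicator_def)
qed

lemma set_integral_pos:
  fixes g :: "'a \<Rightarrow> real"
  assumes "set_integrable M C g" "C \<in> sets M" "emeasure M C \<noteq> 0" "\<And>x. x \<in> C \<Longrightarrow> 0 < g x"
  shows "0 < (LINT x:C|M. g x)"
proof -
  have nonneg: "AE x in M. 0 \<le> indicator C x * g x"
    using assms(4) by (intro AE_I2) (simp add: indicator_def less_imp_le)
  have "(LINT x:C|M. g x) \<noteq> 0"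
  proof
    assume "(LINT x:C|M. g x) = 0"
    then have "AE x in M. indicator C x * g x = 0"
      using assms(1) nonneg unfolding set_integrable_def set_lebesgue_integral_def
      by (simp add: integral_nonneg_eq_0_iff_AE)
    moreover have "indicator C x * g x = 0 \<longrightarrow> x \<notin> C" for x
      using assms(4)[of x] by (cases "x \<in> C") simp_all
    ultimately have "AE x in M. x \<notin> C"
      by (rule AE_mp[OF _ AE_I2])
    moreover have "{x \<in> space M. \<not> x \<notin> C} = C"
      using sets.sets_into_space[OF assms(2)] by blast
    ultimately have "emeasure M C = 0"
      by (subst (asm) AE_iff_measurable[OF assms(2)])
    with assms(3) show False ..
  qed
  moreover have "0 \<le> (LINT x:C|M. g x)"
    using nonneg unfolding set_lebesgue_integral_def by (simp add: integral_nonneg_AE)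
  ultimately show ?thesis by simp
qed

lemma set_integrable_abs_diff_powr:
  assumes "finite_measure M" "in_Lp M p f" "0 \<le> p" "C \<in> sets M"
  shows "set_integrable M C (\<lambda>x. \<bar>f x - c\<bar> powr p)"
  unfolding set_integrable_def
  using integrable_mult_indicator[OF assms(4)
      integrable_abs_diff_powr[OF assms(2) in_Lp_const[OF assms(1,3)] assms(3), of c]]
  by simp

lemma is_pth_mean_measure_zero:
  "finite_measure M \<Longrightarrow> C \<in> sets M \<Longrightarrow> measure M C = 0 \<Longrightarrow> is_pth_mean M p f C a"
  unfolding is_pth_mean_def by (simp add: set_integral_measure_zero)

lemma convex_pth_means_one:
  assumes fin: "finite_measure M" and f: "in_Lp M 1 f" and C: "C \<in> sets M"
  shows "convex {a. is_pth_mean M 1 f C a}"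
proof (rule convexI)
  fix s1 s2 u v :: real assume s: "s1 \<in> {a. is_pth_mean M 1 f C a}" "s2 \<in> {a. is_pth_mean M 1 f C a}"
    and uv: "0 \<le> u" "0 \<le> v" "u + v = 1"
  let ?\<phi> = "\<lambda>c. LINT x:C|M. \<bar>f x - c\<bar>"
  have int: "set_integrable M C (\<lambda>x. \<bar>f x - c\<bar>)" for c
    using set_integrable_abs_diff_powr[OF fin f _ C] by simp
  have "\<bar>f x - (u * s1 + v * s2)\<bar> \<le> u * \<bar>f x - s1\<bar> + v * \<bar>f x - s2\<bar>" for x
  proof -
    have "f x - (u * s1 + v * s2) = u * (f x - s1) + v * (f x - s2)"
      using uv(3) by (simp add: algebra_simps flip: distrib_right)
    then show ?thesis using uv(1,2) by (simp add: abs_triangle_ineq[THEN order_trans] abs_mult)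
  qed
  then have "?\<phi> (u * s1 + v * s2) \<le> (LINT x:C|M. u * \<bar>f x - s1\<bar> + v * \<bar>f x - s2\<bar>)"
    using int by (intro set_integral_mono) auto
  also have "\<dots> = u * ?\<phi> s1 + v * ?\<phi> s2"
    using int by simp
  also have "\<dots> \<le> u * ?\<phi> c + v * ?\<phi> c" for c
    using s uv unfolding is_pth_mean_def by (intro add_mono mult_left_mono) auto
  finally show "u *\<^sub>R s1 + v *\<^sub>R s2 \<in> {a. is_pth_mean M 1 f C a}"
    unfolding is_pth_mean_def using uv(3) by (simp flip: distrib_right)
qed

lemma bounded_pth_means_one:
  assumes fin: "finite_measure M" and f: "in_Lp M 1 f" and C: "C \<in> sets M" and pos: "0 < measure M C"
  shows "bounded {a. is_pth_mean M 1 f C a}"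
proof -
  let ?\<phi> = "\<lambda>c. LINT x:C|M. \<bar>f x - c\<bar>"
  have int: "set_integrable M C (\<lambda>x. \<bar>f x - c\<bar>)" for c
    using set_integrable_abs_diff_powr[OF fin f _ C] by simp
  have int_const: "set_integrable M C (\<lambda>x. c)" for c :: real
    unfolding set_integrable_def
    by (intro integrable_mult_indicator[OF C] finite_measure.integrable_const[OF fin])
  have "norm a \<le> 2 * ?\<phi> 0 / measure M C" if a: "is_pth_mean M 1 f C a" for a
  proof -
    have "measure M C * \<bar>a\<bar> = (LINT x:C|M. \<bar>a\<bar>)"
      using C fin by (simp add: set_integral_const finite_measure.emeasure_finite)
    also have "\<dots> \<le> (LINT x:C|M. \<bar>f x - a\<bar> + \<bar>f x - 0\<bar>)"
      using int[of a] int[of 0] int_const by (intro set_integral_mono set_integral_add(1)) auto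
    also have "\<dots> = ?\<phi> a + ?\<phi> 0"
      using int[of a] int[of 0] by simp
    also have "\<dots> \<le> 2 * ?\<phi> 0"
      using a[unfolded is_pth_mean_def, rule_format, of 0] by simp
    finally show ?thesis
      using pos by (simp add: field_simps)
  qed
  then show ?thesis unfolding bounded_iff by blast
qed

lemma midpoint_Inf_Sup_mem:
  fixes S :: "real set"
  assumes "S \<noteq> {}" "bounded S" "convex S"
  shows "(Inf S + Sup S) / 2 \<in> S"
proof -
  have bdd: "bdd_below S" "bdd_above S"
    using assms(2) by (auto intro: bounded_imp_bdd_below bounded_imp_bdd_above)
  show ?thesis
  proof (cases "Inf S < Sup S")
    case True
    then have "Inf S < (Inf S + Sup S) / 2" "(Inf S + Sup S) / 2 < Sup S" by auto
    then obtain s1 s2 where "s1 \<in> S" "s1 < (Inf S + Sup S) / 2" "s2 \<in> S" "(Inf S + Sup S) / 2 < s2"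
      using cInf_less_iff[OF assms(1) bdd(1)] less_cSup_iff[OF assms(1) bdd(2)] by blast
    then show ?thesis
      using assms(3) unfolding is_interval_convex_1[symmetric] is_interval_1 by (meson less_imp_le)
  next
    case False
    obtain s where s: "s \<in> S" using assms(1) by blast
    then have "Inf S \<le> s" "s \<le> Sup S"
      using bdd by (auto intro: cInf_lower cSup_upper)
    then have "Inf S = s" "Sup S = s" using False by linarith+
    then show ?thesis using s by simp
  qed
qed

lemma powr_midpoint_less:
  fixes s t p :: real
  assumes "0 \<le> s" "s < t" "1 < p"
  shows "((s + t) / 2) powr p < (s powr p + t powr p) / 2"
proof -
  define g where "g y = (s powr p + y powr p) / 2 - ((s + y) / 2) powr p" for y
  have "g s < g t"
  proof (rule DERIV_pos_imp_increasing_open[OF assms(2)])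
    fix y assume y: "s < y" "y < t"
    have "DERIV g y :> p * y powr (p - 1) / 2 - p * ((s + y) / 2) powr (p - 1) * (1 / 2)"
      unfolding g_def using y assms(1) by (auto intro!: derivative_eq_intros)
    moreover have "((s + y) / 2) powr (p - 1) < y powr (p - 1)"
      using y assms by (intro powr_less_mono2) auto
    ultimately show "\<exists>d. DERIV g y :> d \<and> 0 < d"
      using assms(3) by (auto simp: field_simps)
  next
    show "continuous_on {s..t} g"
      unfolding g_def using assms
      by (intro continuous_intros continuous_on_powr') auto
  qed
  then show ?thesis unfolding g_def by simp
qed

lemma abs_powr_midpoint_less:
  fixes u v p :: real
  assumes "u \<noteq> v" "1 < p"
  shows "\<bar>(u + v) / 2\<bar> powr p < (\<bar>u\<bar> powr p + \<bar>v\<bar> powr p) / 2"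
proof (cases "\<bar>u\<bar> = \<bar>v\<bar>")
  case True
  then have "v = - u" "u \<noteq> 0" using assms by (auto simp: abs_eq_iff)
  then show ?thesis using assms by simp
next
  case False
  define s t where "s = min \<bar>u\<bar> \<bar>v\<bar>" and "t = max \<bar>u\<bar> \<bar>v\<bar>"
  have "\<bar>(u + v) / 2\<bar> powr p \<le> ((s + t) / 2) powr p"
    using assms unfolding s_def t_def by (intro powr_mono2) (auto simp: min_def max_def)
  also have "\<dots> < (s powr p + t powr p) / 2"
    using False assms(2) unfolding s_def t_def by (intro powr_midpoint_less) auto
  also have "\<dots> = (\<bar>u\<bar> powr p + \<bar>v\<bar> powr p) / 2"
    unfolding s_def t_def by (auto simp: min_def max_def)
  finally show ?thesis .
qed

lemma pth_mean_unique:
  assumes fin: "finite_measure M" and f: "in_Lp M p f" and p: "1 < p"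
    and C: "C \<in> sets M" and pos: "0 < measure M C"
    and a1: "is_pth_mean M p f C a1" and a2: "is_pth_mean M p f C a2"
  shows "a1 = a2"
proof (rule ccontr)
  assume ne: "a1 \<noteq> a2"
  define c where "c = (a1 + a2) / 2"
  let ?\<phi> = "\<lambda>c. LINT x:C|M. \<bar>f x - c\<bar> powr p"
  have int: "set_integrable M C (\<lambda>x. \<bar>f x - c\<bar> powr p)" for c
    using set_integrable_abs_diff_powr[OF fin f _ C] p by simp
  have gap: "0 < \<bar>f x - a1\<bar> powr p + \<bar>f x - a2\<bar> powr p - 2 * \<bar>f x - c\<bar> powr p" for x
  proof -
    have "\<bar>(f x - a1 + (f x - a2)) / 2\<bar> powr p < (\<bar>f x - a1\<bar> powr p + \<bar>f x - a2\<bar> powr p) / 2"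
      using ne p by (intro abs_powr_midpoint_less) auto
    moreover have "(f x - a1 + (f x - a2)) / 2 = f x - c" unfolding c_def by (simp add: field_simps)
    ultimately have "\<bar>f x - c\<bar> powr p < (\<bar>f x - a1\<bar> powr p + \<bar>f x - a2\<bar> powr p) / 2"
      by (simp only:)
    then show ?thesis by (simp add: field_simps)
  qed
  have "0 < (LINT x:C|M. \<bar>f x - a1\<bar> powr p + \<bar>f x - a2\<bar> powr p - 2 * \<bar>f x - c\<bar> powr p)"
    using int C pos gap fin
    by (intro set_integral_pos) (auto simp: finite_measure.emeasure_eq_measure)
  also have "\<dots> = ?\<phi> a1 + ?\<phi> a2 - 2 * ?\<phi> c"
    using int by simp
  also have "\<dots> \<le> 0"
    using a1[unfolded is_pth_mean_def, rule_format, of c] a2[unfolded is_pth_mean_def, rule_format, of c]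
    by simp
  finally show False by simp
qed

lemma Mp_is_pth_mean:
  assumes fin: "finite_measure M" and f: "in_Lp M p f" and p: "1 \<le> p" and C: "C \<in> sets M"
    and mean: "is_pth_mean M p f C b"
  shows "is_pth_mean M p f C (Mp M p f C)"
proof (cases "measure M C = 0")
  case True
  then show ?thesis by (rule is_pth_mean_measure_zero[OF fin C])
next
  case nonnull: False
  then have pos: "0 < measure M C" using measure_nonneg[of M C] by linarith
  show ?thesis
  proof (cases "p = 1")
    case True
    let ?S = "{a. is_pth_mean M 1 f C a}"
    have "(Inf ?S + Sup ?S) / 2 \<in> ?S"
      using mean True convex_pth_means_one[OF fin _ C] bounded_pth_means_one[OF fin _ C pos] f
      by (intro midpoint_Inf_Sup_mem) auto
    then show ?thesis unfolding Mp_def using nonnull True by simp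
  next
    case False
    then have "1 < p" using p by simp
    then have "is_pth_mean M p f C (THE a. is_pth_mean M p f C a)"
      using pth_mean_unique[OF fin f _ C pos] mean by (metis theI)
    then show ?thesis unfolding Mp_def using nonnull False by simp
  qed
qed

section \<open>The cells of a minimiser\<close>

lemma thr_mono:
  assumes b: "strict_mono_on {1..q} b" and "1 \<le> i" "i \<le> j" "j \<le> q + 1"
  shows "thr b q i \<le> thr b q j"
proof (cases "i = 1 \<or> j = q + 1")
  case True
  then show ?thesis using assms by (auto simp: thr_def)
next
  case False
  then have "b (i - 1) \<le> b (j - 1)" "b i \<le> b j"
    using assms by (auto intro!: strict_mono_on_leD[OF b])
  then show ?thesis using False assms by (simp add: thr_def)
qed

lemma Cset_sets:
  assumes [measurable]: "f \<in> borel_measurable M"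
  shows "Cset M f b q i \<in> sets M"
  unfolding Cset_def by measurable

lemma is_partition_Cset:
  assumes f: "f \<in> borel_measurable M" and b: "strict_mono_on {1..q} b"
    and q: "space M \<noteq> {} \<Longrightarrow> 1 \<le> q"
  shows "is_partition M q (Cset M f b q)"
  unfolding is_partition_def
proof (intro conjI ballI impI)
  show "Cset M f b q i \<in> sets M" for i by (rule Cset_sets[OF f])
next
  have "Cset M f b q i \<inter> Cset M f b q j = {}" if "i \<in> {1..q}" "j \<in> {1..q}" "i < j" for i j
    using thr_mono[OF b, of "i + 1" j] that unfolding Cset_def by fastforce
  then show "Cset M f b q i \<inter> Cset M f b q j = {}" if "i \<in> {1..q}" "j \<in> {1..q}" "i \<noteq> j" for i j
    using that by (metis Int_commute linorder_neqE_nat)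
next
  have "\<exists>i\<in>{1..q}. x \<in> Cset M f b q i" if x: "x \<in> space M" for x
  proof -
    define I where "I = {i\<in>{1..q}. thr b q i \<le> ereal (f x)}"
    have fin: "finite I" unfolding I_def by simp
    have "1 \<in> I" using q x unfolding I_def by (auto simp: thr_def)
    then have i0: "Max I \<in> I" using fin by (intro Max_in) auto
    have "ereal (f x) < thr b q (Max I + 1)"
    proof (cases "Max I = q")
      case False
      have "Max I + 1 \<notin> I" using Max_ge[OF fin] by fastforce
      moreover have "Max I + 1 \<in> {1..q}" using i0 False unfolding I_def by auto
      ultimately show ?thesis unfolding I_def by auto
    qed (use i0 in \<open>auto simp: I_def thr_def\<close>)
    then show ?thesis using i0 x unfolding I_def Cset_def by auto
  qed
  then show "(\<Union>i\<in>{1..q}. Cset M f b q i) = space M"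
    unfolding Cset_def by blast
qed

lemma Cset_nearest:
  assumes b: "strict_mono_on {1..q} b" and x: "x \<in> Cset M f b q i"
    and i: "i \<in> {1..q}" and j: "j \<in> {1..q}"
  shows "\<bar>f x - b i\<bar> \<le> \<bar>f x - b j\<bar>"
proof (cases i j rule: linorder_cases)
  case less
  then have "f x < (b i + b (i + 1)) / 2" using x i j unfolding Cset_def by (simp add: thr_def)
  moreover have "b (i + 1) \<le> b j" "b i < b j"
    using less i j by (auto intro: strict_mono_on_leD[OF b] strict_mono_onD[OF b])
  ultimately show ?thesis by (auto simp: abs_if)
next
  case greater
  then have "(b (i - 1) + b i) / 2 \<le> f x" using x i j unfolding Cset_def by (simp add: thr_def)
  moreover have "b j \<le> b (i - 1)" "b j < b i"
    using greater i j strict_mono_on_leD[OF b, of j "i - 1"] strict_mono_onD[OF b, of j i] by auto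
  ultimately show ?thesis by (auto simp: abs_if)
qed simp

lemma integral_step_fun_split:
  assumes fin: "finite_measure M" and C: "is_partition M q C" and f: "in_Lp M p f" and p: "0 \<le> p"
  shows "(\<integral>x. \<bar>f x - step_fun q c C x\<bar> powr p \<partial>M) = (\<Sum>i=1..q. LINT x:C i|M. \<bar>f x - c i\<bar> powr p)"
proof -
  have "\<bar>f x - step_fun q c C x\<bar> powr p = (\<Sum>i=1..q. indicator (C i) x * \<bar>f x - c i\<bar> powr p)"
    if x: "x \<in> space M" for x
  proof -
    obtain j where "j \<in> {1..q}" "x \<in> C j" "step_fun q c C x = c j"
      using step_fun_value[OF C x] by metis
    moreover have "step_fun q (\<lambda>i. \<bar>f x - c i\<bar> powr p) C x = \<bar>f x - c j\<bar> powr p"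
      using step_fun_eq[OF C] calculation(1,2) .
    ultimately show ?thesis by (simp add: mult.commute)
  qed
  then have "(\<integral>x. \<bar>f x - step_fun q c C x\<bar> powr p \<partial>M)
      = (\<integral>x. (\<Sum>i=1..q. indicator (C i) x * \<bar>f x - c i\<bar> powr p) \<partial>M)"
    by (intro Bochner_Integration.integral_cong) auto
  also have "\<dots> = (\<Sum>i=1..q. \<integral>x. indicator (C i) x * \<bar>f x - c i\<bar> powr p \<partial>M)"
  proof (rule Bochner_Integration.integral_sum)
    fix i assume "i \<in> {1..q}"
    show "integrable M (\<lambda>x. indicator (C i) x * \<bar>f x - c i\<bar> powr p)"
      using integrable_mult_indicator[OF is_partition_sets[OF C \<open>i \<in> {1..q}\<close>]
          integrable_abs_diff_powr[OF f in_Lp_const[OF fin p] p]] by simp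
  qed
  finally show ?thesis by (simp add: set_lebesgue_integral_def)
qed

context
  fixes M :: "'a measure" and p :: real and k q :: nat and f :: "'a \<Rightarrow> real"
    and b :: "nat \<Rightarrow> real" and A :: "nat \<Rightarrow> 'a set"
  assumes fin: "finite_measure M" and p: "1 \<le> p" and f: "in_Lp M p f" and qk: "q \<le> k"
    and b: "strict_mono_on {1..q} b" and A: "is_partition M q A"
    and min: "is_minimizer M p k f (step_fun q b A)"
begin

lemma Cset_in_sets: "Cset M f b q i \<in> sets M"
  using f unfolding in_Lp_def by (simp add: Cset_sets)

lemma is_partition_Cset_of_minimizer: "is_partition M q (Cset M f b q)"
proof (rule is_partition_Cset[OF _ b])
  show "f \<in> borel_measurable M" using f unfolding in_Lp_def by simp
  show "1 \<le> q" if "space M \<noteq> {}"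
    using A that unfolding is_partition_def by (cases q) auto
qed

lemma step_fun_Cset_in_Gset: "q \<le> l \<Longrightarrow> step_fun q c (Cset M f b q) \<in> Gset M p l"
  using step_fun_in_Gset[OF fin is_partition_Cset_of_minimizer] p by simp

lemma integral_step_fun_Cset:
  "(\<integral>x. \<bar>f x - step_fun q c (Cset M f b q) x\<bar> powr p \<partial>M)
    = (\<Sum>i=1..q. LINT x:Cset M f b q i|M. \<bar>f x - c i\<bar> powr p)"
  using integral_step_fun_split[OF fin is_partition_Cset_of_minimizer f] p by simp

lemma is_minimizer_step_fun_Cset: "is_minimizer M p k f (step_fun q b (Cset M f b q))"
proof (rule is_minimizer_if_integral_le[OF min step_fun_Cset_in_Gset[OF qk] order_refl])
  show "0 < p" using p by simp
  have "\<bar>f x - step_fun q b (Cset M f b q) x\<bar> powr p \<le> \<bar>f x - step_fun q b A x\<bar> powr p" if x: "x \<in> space M" for x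
  proof -
    obtain i where i: "i \<in> {1..q}" "x \<in> Cset M f b q i" "step_fun q b (Cset M f b q) x = b i"
      using step_fun_value[OF is_partition_Cset_of_minimizer x] by metis
    obtain j where j: "j \<in> {1..q}" "step_fun q b A x = b j"
      using step_fun_value[OF A x] by metis
    have "\<bar>f x - b i\<bar> \<le> \<bar>f x - b j\<bar>"
      using Cset_nearest[OF b i(2,1) j(1)] .
    then show ?thesis
      unfolding i(3) j(2) using p by (intro powr_mono2) auto
  qed
  then show "(\<integral>x. \<bar>f x - step_fun q b (Cset M f b q) x\<bar> powr p \<partial>M) \<le> (\<integral>x. \<bar>f x - step_fun q b A x\<bar> powr p \<partial>M)"
    using step_fun_in_Lp[OF fin is_partition_Cset_of_minimizer] step_fun_in_Lp[OF fin A] p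
    by (intro integral_mono integrable_abs_diff_powr[OF f]) auto
qed

text \<open>Changing the value on a single C_i changes the cost only on C_i, so minimality of
  the step function forces each b_i to be a p-th mean on its cell.\<close>

lemma is_pth_mean_Cset: "i \<in> {1..q} \<Longrightarrow> is_pth_mean M p f (Cset M f b q i) (b i)"
proof (rule ccontr)
  assume i: "i \<in> {1..q}" and "\<not> is_pth_mean M p f (Cset M f b q i) (b i)"
  then obtain c where c: "(LINT x:Cset M f b q i|M. \<bar>f x - c\<bar> powr p) < (LINT x:Cset M f b q i|M. \<bar>f x - b i\<bar> powr p)"
    unfolding is_pth_mean_def by (auto simp: not_le)
  have "(\<Sum>j=1..q. LINT x:Cset M f b q j|M. \<bar>f x - (b(i := c)) j\<bar> powr p)
      < (\<Sum>j=1..q. LINT x:Cset M f b q j|M. \<bar>f x - b j\<bar> powr p)"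
    using i c by (intro sum_strict_mono_ex1) auto
  moreover have "(\<integral>x. \<bar>f x - step_fun q b (Cset M f b q) x\<bar> powr p \<partial>M)
      \<le> (\<integral>x. \<bar>f x - step_fun q (b(i := c)) (Cset M f b q) x\<bar> powr p \<partial>M)"
    using p by (intro is_minimizer_integral_le[OF is_minimizer_step_fun_Cset step_fun_Cset_in_Gset[OF qk]])
      simp
  ultimately show False unfolding integral_step_fun_Cset by linarith
qed

lemma is_minimizer_Mp_step_fun_Cset: "is_minimizer M p q f (step_fun q (\<lambda>i. Mp M p f (Cset M f b q i)) (Cset M f b q))"
proof (rule is_minimizer_if_integral_le[OF is_minimizer_step_fun_Cset step_fun_Cset_in_Gset[OF order_refl] qk])
  show "0 < p" using p by simp
  have "(LINT x:Cset M f b q i|M. \<bar>f x - Mp M p f (Cset M f b q i)\<bar> powr p) \<le> (LINT x:Cset M f b q i|M. \<bar>f x - b i\<bar> powr p)"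
    if i: "i \<in> {1..q}" for i
    using Mp_is_pth_mean[OF fin f p is_partition_sets[OF is_partition_Cset_of_minimizer i] is_pth_mean_Cset[OF i]]
    unfolding is_pth_mean_def by blast
  then show "(\<integral>x. \<bar>f x - step_fun q (\<lambda>i. Mp M p f (Cset M f b q i)) (Cset M f b q) x\<bar> powr p \<partial>M)
      \<le> (\<integral>x. \<bar>f x - step_fun q b (Cset M f b q) x\<bar> powr p \<partial>M)"
    unfolding integral_step_fun_Cset by (rule sum_mono)
qed

text \<open>On a null cell the value b_i can be replaced by another b_j at no cost.\<close>

lemma exists_minimizer_fewer_values:
  assumes q: "2 \<le> q" and i: "i \<in> {1..q}" and null: "measure M (Cset M f b q i) = 0"
  obtains h where "is_minimizer M p k f h" "card (h ` space M) < q"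
proof
  define i' where "i' = (if i = 1 then 2 else (1::nat))"
  have i': "i' \<in> {1..q}" "i' \<noteq> i" using q i unfolding i'_def by auto
  define b' where "b' = b(i := b i')"
  have "(\<Sum>j=1..q. LINT x:Cset M f b q j|M. \<bar>f x - b' j\<bar> powr p)
      = (\<Sum>j=1..q. LINT x:Cset M f b q j|M. \<bar>f x - b j\<bar> powr p)"
    using set_integral_measure_zero[OF fin Cset_in_sets null] unfolding b'_def by (intro sum.cong) auto
  then have "(\<integral>x. \<bar>f x - step_fun q b' (Cset M f b q) x\<bar> powr p \<partial>M)
      = (\<integral>x. \<bar>f x - step_fun q b (Cset M f b q) x\<bar> powr p \<partial>M)"
    by (simp only: integral_step_fun_Cset)
  then show "is_minimizer M p k f (step_fun q b' (Cset M f b q))"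
    using p by (intro is_minimizer_if_integral_le[OF is_minimizer_step_fun_Cset step_fun_Cset_in_Gset[OF qk] order_refl])
      simp_all
  have "step_fun q b' (Cset M f b q) ` space M \<subseteq> b ` ({1..q} - {i})"
  proof
    fix y assume "y \<in> step_fun q b' (Cset M f b q) ` space M"
    then obtain x where x: "x \<in> space M" "y = step_fun q b' (Cset M f b q) x" by blast
    obtain j where "j \<in> {1..q}" "step_fun q b' (Cset M f b q) x = b' j"
      using step_fun_value[OF is_partition_Cset_of_minimizer x(1)] by metis
    then show "y \<in> b ` ({1..q} - {i})" using i' x(2) unfolding b'_def by (cases "j = i") auto
  qed
  then have "card (step_fun q b' (Cset M f b q) ` space M) \<le> card (b ` ({1..q} - {i}))"
    by (rule card_mono[rotated]) simp
  also have "\<dots> \<le> card ({1..q} - {i})"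
    by (rule card_image_le) simp
  also have "\<dots> < q"
    using i by simp
  finally show "card (step_fun q b' (Cset M f b q) ` space M) < q" .
qed

lemma measure_Cset_pos:
  assumes A_pos: "\<And>i. i \<in> {1..q} \<Longrightarrow> 0 < measure M (A i)"
    and min_card: "\<And>h. is_minimizer M p k f h \<Longrightarrow> q \<le> card (h ` space M)"
    and i: "i \<in> {1..q}"
  shows "0 < measure M (Cset M f b q i)"
proof (rule ccontr)
  assume "\<not> 0 < measure M (Cset M f b q i)"
  then have null: "measure M (Cset M f b q i) = 0" using measure_nonneg[of M "Cset M f b q i"] by linarith
  show False
  proof (cases "q = 1")
    case True
    then have "i = 1" "Cset M f b q 1 = space M"
      using i is_partition_Cset_of_minimizer unfolding is_partition_def by auto
    moreover have "A 1 \<subseteq> space M"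
      using sets.sets_into_space[OF is_partition_sets[OF A]] True by auto
    ultimately have "measure M (A i) \<le> measure M (Cset M f b q i)"
      using Cset_in_sets by (intro finite_measure.finite_measure_mono[OF fin]) auto
    then show False using A_pos[OF i] null by simp
  next
    case False
    then have "2 \<le> q" using i by simp
    then obtain h where h: "is_minimizer M p k f h" "card (h ` space M) < q"
      using exists_minimizer_fewer_values[OF _ i null] by blast
    then show False using min_card[OF h(1)] by simp
  qed
qed

end

theorem theorem2p3:
  fixes M :: "'a measure" and p :: real and k :: nat
  assumes "finite_measure M" and "1 \<le> p" and "1 \<le> k"
  shows "proximinal M p k \<and>
    (\<forall>f q b A.
       in_Lp M p f \<and> q \<le> k \<and> (\<forall>i\<in>{1..q}. \<forall>j\<in>{1..q}. i < j \<longrightarrow> b i < b j) \<and>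
       is_partition M q A \<and> (\<forall>i\<in>{1..q}. measure M (A i) > 0) \<and>
       is_minimizer M p k f (\<lambda>x. \<Sum>i=1..q. b i * indicator (A i) x)
     \<longrightarrow>
       is_minimizer M p k f (\<lambda>x. \<Sum>i=1..q. b i * indicator (Cset M f b q i) x) \<and>
       (\<forall>i\<in>{1..q}. measure M (Cset M f b q i) > 0 \<longrightarrow> is_pth_mean M p f (Cset M f b q i) (b i)) \<and>
       is_minimizer M p q f (\<lambda>x. \<Sum>i=1..q. Mp M p f (Cset M f b q i) * indicator (Cset M f b q i) x) \<and>
       ((\<forall>h. is_minimizer M p k f h \<longrightarrow> q \<le> card (h ` space M)) \<longrightarrow>
          (\<forall>i\<in>{1..q}. measure M (Cset M f b q i) > 0)))"
proof (intro conjI allI impI; (elim conjE)?)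
  show "proximinal M p k" by (rule proximinal_Gset[OF assms])
next
  fix f q b A
  assume f: "in_Lp M p f" and qk: "q \<le> k" and b: "\<forall>i\<in>{1..q}. \<forall>j\<in>{1..q}. i < j \<longrightarrow> b i < b j"
    and A: "is_partition M q A" and A_pos: "\<forall>i\<in>{1..q}. measure M (A i) > 0"
    and min: "is_minimizer M p k f (step_fun q b A)"
  have "strict_mono_on {1..q} b" using b by (auto simp: strict_mono_on_def)
  note setting = assms(1,2) f qk this A min
  show "is_minimizer M p k f (step_fun q b (Cset M f b q))"
    by (rule is_minimizer_step_fun_Cset[OF setting])
  show "\<forall>i\<in>{1..q}. measure M (Cset M f b q i) > 0 \<longrightarrow> is_pth_mean M p f (Cset M f b q i) (b i)"
    using is_pth_mean_Cset[OF setting] by blast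
  show "is_minimizer M p q f (step_fun q (\<lambda>i. Mp M p f (Cset M f b q i)) (Cset M f b q))"
    by (rule is_minimizer_Mp_step_fun_Cset[OF setting])
  show "\<forall>i\<in>{1..q}. measure M (Cset M f b q i) > 0"
    if "\<forall>h. is_minimizer M p k f h \<longrightarrow> q \<le> card (h ` space M)"
    using measure_Cset_pos[OF setting] A_pos that by blast
qed
end
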